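(* Let $X$ be a finite set, $f:2^X\to\mathbb{R}_{\ge 0}$ a normalized monotone submodular function, $n\ge1$ an integer with $n\le|X|$, and $S^*\in\arg\max_{S\subseteq X,\,|S|\le n} f(S)$. Let $x_1,\dots,x_n\in X$ be distinct, set $S_0=\emptyset$, $S_i=\{x_1,\dots,x_i\}$, $S=S_n$, and let $\alpha_1,\dots,\alpha_n$ be positive reals such that for every $i\in\{1,\dots,n\}$, \[ \alpha_i\, f(x_i\mid S_{i-1}) \ \ge\ \max_{x\in X\setminus S_{i-1}} f(x\mid S_{i-1}). \] Then \[ f(S)\ \ge\ \left(1-e^{-\frac{1}{n}\sum_{i=1}^n \frac{1}{\alpha_i}}\right) f(S^* ). \]
   Context: For $A\subseteq X$ and $x\in X$, $f(x\mid A):=f(A\cup\{x\})-f(A)$, and $f(x):=f(\{x\})$. Submodular: $f(x\mid A)\ge f(x\mid B)$ for all $A\subseteq B\subseteq X$, $x\in X\setminus B$; monotone: $f(A)\le f(B)$ for $A\subseteq B$; normalized: $f(\emptyset)=0$. *)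

theory Defs
  imports "HOL-Analysis.Analysis"
begin

definition marg :: "('a set \<Rightarrow> real) \<Rightarrow> 'a \<Rightarrow> 'a set \<Rightarrow> real" where
  "marg f x A = f (A \<union> {x}) - f A"

definition submodular_on :: "'a set \<Rightarrow> ('a set \<Rightarrow> real) \<Rightarrow> bool" where
  "submodular_on X f \<longleftrightarrow>
     (\<forall>A B x. A \<subseteq> B \<longrightarrow> B \<subseteq> X \<longrightarrow> x \<in> X - B \<longrightarrow> marg f x A \<ge> marg f x B)"

definition monotone_on_sets :: "'a set \<Rightarrow> ('a set \<Rightarrow> real) \<Rightarrow> bool" where
  "monotone_on_sets X f \<longleftrightarrow> (\<forall>A B. A \<subseteq> B \<longrightarrow> B \<subseteq> X \<longrightarrow> f A \<le> f B)"

definition normalized :: "('a set \<Rightarrow> real) \<Rightarrow> bool" where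
  "normalized f \<longleftrightarrow> f {} = 0"

end

theory Submission
  imports Defs
begin

text \<open>
  Let S_k = {x_1, ..., x_k} and OPT = f(S*). Monotonicity and submodularity give
  OPT <= f(S_k \<union> S*) <= f(S_k) + sum over y in S* of f(y | S_k), and each of the at most n
  marginals is at most alpha_(k+1) f(x_(k+1) | S_k). So the gap d_k = OPT - f(S_k) satisfies
  d_k <= n alpha_(k+1) (d_k - d_(k+1)), i.e. d_(k+1) <= (1 - 1/(n alpha_(k+1))) d_k
  <= exp(-1/(n alpha_(k+1))) d_k, and iterating from d_0 = OPT gives the bound.
\<close>

lemma marg_of_mem: "y \<in> A \<Longrightarrow> marg f y A = 0"
  unfolding marg_def by (simp add: insert_absorb)

lemma marg_nonneg:
  assumes "monotone_on_sets X f" "A \<subseteq> X" "y \<in> X"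
  shows "marg f y A \<ge> 0"
  using assms unfolding monotone_on_sets_def marg_def by (simp add: subset_insertI)

lemma submodular_union_le_sum_marg:
  assumes submod: "submodular_on X f" and A: "A \<subseteq> X"
    and T: "finite T" "T \<subseteq> X"
  shows "f (A \<union> T) \<le> f A + (\<Sum>y\<in>T. marg f y A)"
  using T
proof (induction T rule: finite_induct)
  case empty
  then show ?case by simp
next
  case (insert y T)
  then have IH: "f (A \<union> T) \<le> f A + (\<Sum>y\<in>T. marg f y A)" by simp
  have sum_insert: "(\<Sum>y\<in>insert y T. marg f y A) = marg f y A + (\<Sum>y\<in>T. marg f y A)"
    using insert by simp
  show ?case
  proof (cases "y \<in> A")
    case True
    then have "A \<union> insert y T = A \<union> T" by auto
    then show ?thesis using IH sum_insert marg_of_mem[OF True] by simp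
  next
    case False
    have "marg f y (A \<union> T) \<le> marg f y A"
      using submod False insert A unfolding submodular_on_def by auto
    moreover have "f (A \<union> insert y T) = f (A \<union> T) + marg f y (A \<union> T)"
      unfolding marg_def by (simp add: Un_insert_right)
    ultimately show ?thesis using IH sum_insert by linarith
  qed
qed

lemma approx_greedy_step:
  assumes finX: "finite X"
    and mono: "monotone_on_sets X f" and submod: "submodular_on X f"
    and A: "A \<subseteq> X" and y: "y \<in> X - A"
    and T: "T \<subseteq> X" "card T \<le> n"
    and greedy: "\<alpha> * marg f y A \<ge> Max ((\<lambda>z. marg f z A) ` (X - A))"
  shows "f T - f A \<le> real n * \<alpha> * marg f y A"
proof -
  define M where "M = Max ((\<lambda>z. marg f z A) ` (X - A))"
  have M_ge: "marg f z A \<le> M" if "z \<in> T" for z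
  proof (cases "z \<in> A")
    case True
    have "marg f y A \<le> M" unfolding M_def using finX y by (intro Max_ge) auto
    then show ?thesis using marg_of_mem[OF True] marg_nonneg[OF mono A] y by force
  next
    case False
    then show ?thesis unfolding M_def using finX T that by (intro Max_ge) auto
  qed
  have M_nonneg: "M \<ge> 0"
    using marg_nonneg[OF mono A, of y] y finX unfolding M_def by (intro Max_ge_iff[THEN iffD2]) auto
  have "f T \<le> f (A \<union> T)"
    using mono A T unfolding monotone_on_sets_def by auto
  also have "\<dots> \<le> f A + (\<Sum>z\<in>T. marg f z A)"
    using submodular_union_le_sum_marg[OF submod A] T finX by (auto intro: finite_subset)
  also have "(\<Sum>z\<in>T. marg f z A) \<le> real (card T) * M"
    using sum_mono[of T "\<lambda>z. marg f z A" "\<lambda>_. M"] M_ge by simp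
  also have "\<dots> \<le> real n * M"
    using T M_nonneg by (simp add: mult_right_mono)
  also have "\<dots> \<le> real n * (\<alpha> * marg f y A)"
    using greedy unfolding M_def by (simp add: mult_left_mono)
  finally show ?thesis by (simp add: algebra_simps)
qed

lemma exp_decay_of_gap_recurrence:
  fixes d c :: "nat \<Rightarrow> real"
  assumes "\<And>k. k < m \<Longrightarrow> d k \<ge> 0"
    and "\<And>k. k < m \<Longrightarrow> c k > 0"
    and "\<And>k. k < m \<Longrightarrow> d k \<le> c k * (d k - d (Suc k))"
  shows "d m \<le> exp (- (\<Sum>k<m. 1 / c k)) * d 0"
  using assms
proof (induction m)
  case 0
  then show ?case by simp
next
  case (Suc m)
  have d_nonneg: "d m \<ge> 0" and c_pos: "c m > 0"
    and rec: "d m \<le> c m * (d m - d (Suc m))" using Suc.prems by auto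
  have "d (Suc m) \<le> (1 - 1 / c m) * d m"
    using rec c_pos by (simp add: field_simps)
  also have "\<dots> \<le> exp (- (1 / c m)) * d m"
    using d_nonneg exp_ge_add_one_self[of "- (1 / c m)"] by (intro mult_right_mono) auto
  also have "\<dots> \<le> exp (- (1 / c m)) * (exp (- (\<Sum>k<m. 1 / c k)) * d 0)"
    using Suc by (intro mult_left_mono) auto
  also have "\<dots> = exp (- (\<Sum>k<Suc m. 1 / c k)) * d 0"
    by (simp add: exp_add[symmetric] algebra_simps)
  finally show ?case .
qed

theorem theorem1:
  fixes X :: "'a set" and f :: "'a set \<Rightarrow> real" and n :: nat
    and Sstar :: "'a set" and x :: "nat \<Rightarrow> 'a" and \<alpha> :: "nat \<Rightarrow> real"
  assumes finX: "finite X"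
    and nonneg: "\<forall>A. A \<subseteq> X \<longrightarrow> f A \<ge> 0"
    and norm: "normalized f"
    and mono: "monotone_on_sets X f"
    and submod: "submodular_on X f"
    and n_pos: "n \<ge> 1" and n_le: "n \<le> card X"
    and Sstar_feas: "Sstar \<subseteq> X" "card Sstar \<le> n"
    and Sstar_opt: "\<forall>T. T \<subseteq> X \<longrightarrow> card T \<le> n \<longrightarrow> f T \<le> f Sstar"
    and x_in: "\<forall>i\<in>{1..n}. x i \<in> X"
    and x_dist: "inj_on x {1..n}"
    and \<alpha>_pos: "\<forall>i\<in>{1..n}. \<alpha> i > 0"
    and greedy: "\<forall>i\<in>{1..n}.
        \<alpha> i * marg f (x i) (x ` {1..i-1})
          \<ge> Max ((\<lambda>y. marg f y (x ` {1..i-1})) ` (X - x ` {1..i-1}))"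
  shows "f (x ` {1..n}) \<ge> (1 - exp (- (1 / real n) * (\<Sum>i=1..n. 1 / \<alpha> i))) * f Sstar"
proof -
  define S where "S k = x ` {1..k}" for k
  define d where "d k = f Sstar - f (S k)" for k
  have S_sub: "S k \<subseteq> X" if "k \<le> n" for k using x_in that unfolding S_def by auto
  have S_Suc: "S (Suc k) = S k \<union> {x (Suc k)}" for k
    unfolding S_def by (auto simp: atLeastAtMostSuc_conv)
  have x_new: "x (Suc k) \<in> X - S k" if "k < n" for k
    using x_in x_dist that unfolding S_def by (auto dest: inj_onD)
  have "d k \<ge> 0" if "k \<le> n" for k
    using Sstar_opt S_sub[OF that] x_dist that unfolding d_def S_def
    by (simp add: card_image inj_on_subset)
  moreover have "d k \<le> (real n * \<alpha> (Suc k)) * (d k - d (Suc k))" if "k < n" for k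
  proof -
    have "\<alpha> (Suc k) * marg f (x (Suc k)) (S k) \<ge> Max ((\<lambda>z. marg f z (S k)) ` (X - S k))"
      using greedy that unfolding S_def by force
    then have "f Sstar - f (S k) \<le> real n * \<alpha> (Suc k) * marg f (x (Suc k)) (S k)"
      using that by (intro approx_greedy_step[OF finX mono submod S_sub x_new Sstar_feas]) auto
    then show ?thesis unfolding d_def marg_def S_Suc by simp
  qed
  ultimately have "d n \<le> exp (- (\<Sum>k<n. 1 / (real n * \<alpha> (Suc k)))) * d 0"
    using \<alpha>_pos n_pos by (intro exp_decay_of_gap_recurrence) auto
  moreover have "(\<Sum>k<n. 1 / (real n * \<alpha> (Suc k))) = (1 / real n) * (\<Sum>i=1..n. 1 / \<alpha> i)"
    by (simp add: sum_distrib_left sum.atLeast1_atMost_eq)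
  moreover have "d 0 = f Sstar" using norm unfolding d_def S_def normalized_def by simp
  ultimately show ?thesis unfolding d_def S_def by (simp add: algebra_simps)
qed

end
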